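(* Let $H$ be a binary tree based graph, let $V_1,\dots,V_q$ be pairwise disjoint sets of variables of $\phi_H$, and for each $1\le i\le q$ let ${\bf S}_i$ be a family of guarded sets of literals, each $S\in{\bf S}_i$ having variable set exactly $V_i$. Then $$\Pr\Big(\bigcap_{i=1}^q\bigcup_{S\in{\bf S}_i}{\bf EC}(S)\Big)=\prod_{i=1}^q\Pr\Big(\bigcup_{S\in{\bf S}_i}{\bf EC}(S)\Big).$$
   Context: Sets of literals never contain a variable together with its negation. A rooted tree is extended if none of its leaves has a sibling. A graph $H$ is a binary tree based graph if it is the edge-disjoint union of extended rooted trees $T_1,\dots,T_m$ with roots $t_1,\dots,t_m$ such that every leaf of some $T_i$ is a leaf of exactly two of the trees, and any two trees have at most one common vertex, which is a leaf of both. $T_i,T_j$ are adjacent if they share a leaf $\ell_{i,j}$; $P_{i,j}$ is the path between $t_i$ and $t_j$ in $T_i\cup T_j$. A pseudoedge is a pair $\{t_i,t_j\}$ with $T_i,T_j$ adjacent. $\phi_H$ is the CNF on variables $V(H)$ with a clause $C_{i,j}$ (positive literals of $V(P_{i,j})$) for each pseudoedge; the non-leaf variables of $C_{i,j}$ are its variables other than $\ell_{i,j}$. A set $S$ of literals is guarded from $C_{i,j}$ if (1) $\ell_{i,j}$ does not occur in $S$, or (2) some non-leaf variable of $C_{i,j}$ occurs positively in $S$, or (3) $\ell_{i,j}$ occurs positively in $S$ and all other variables of $C_{i,j}$ occur negatively in $S$; $S$ is guarded if it is guarded from every clause of $\phi_H$. The positive literal $\ell_{i,j}$ is fixed w.r.t.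 $S$ if $\ell_{i,j}\in S$ and all other variables of $C_{i,j}$ occur negatively in $S$; $Fix(S)$ is the set of fixed literals. ${\bf SAT}(H)$ is the set of satisfying assignments of $\phi_H$; each $S'\in{\bf SAT}(H)$ has probability $(1/2)^{|V(H)\setminus Fix(S')|}$. ${\bf EC}(S)=\{S'\in{\bf SAT}(H):S\subseteq S'\}$. *)

theory Defs
  imports Complex_Main
begin

(* Literals are pairs (x, b): (x,True) is the positive literal x, (x,False) its negation. *)
type_synonym 'a lit = "'a \<times> bool"

definition consistent :: "'a lit set \<Rightarrow> bool" where
  "consistent S \<longleftrightarrow> \<not> (\<exists>x. (x, True) \<in> S \<and> (x, False) \<in> S)"

definition occurs :: "'a \<Rightarrow> 'a lit set \<Rightarrow> bool" where
  "occurs x S \<longleftrightarrow> (x, True) \<in> S \<or> (x, False) \<in> S"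

definition lit_vars :: "'a lit set \<Rightarrow> 'a set" where
  "lit_vars S = fst ` S"

(* A rooted tree: finite vertex set V, root r, parent function p (meaningful on V - {r});
   every vertex reaches the root by iterating p. Its edges are {v, p v} for v \<noteq> r. *)
definition rooted_tree :: "'a set \<Rightarrow> 'a \<Rightarrow> ('a \<Rightarrow> 'a) \<Rightarrow> bool" where
  "rooted_tree V r p \<longleftrightarrow> finite V \<and> r \<in> V \<and> (\<forall>v\<in>V - {r}. p v \<in> V)
     \<and> (\<forall>v\<in>V. \<exists>n. (p ^^ n) v = r)"

definition tree_edges :: "'a set \<Rightarrow> 'a \<Rightarrow> ('a \<Rightarrow> 'a) \<Rightarrow> 'a set set" where
  "tree_edges V r p = {{v, p v} | v. v \<in> V - {r}}"

definition children :: "'a set \<Rightarrow> 'a \<Rightarrow> ('a \<Rightarrow> 'a) \<Rightarrow> 'a \<Rightarrow> 'a set" where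
  "children V r p u = {v \<in> V - {r}. p v = u}"

definition leaves :: "'a set \<Rightarrow> 'a \<Rightarrow> ('a \<Rightarrow> 'a) \<Rightarrow> 'a set" where
  "leaves V r p = {v \<in> V - {r}. children V r p v = {}}"

definition extended_rooted_tree :: "'a set \<Rightarrow> 'a \<Rightarrow> ('a \<Rightarrow> 'a) \<Rightarrow> bool" where
  "extended_rooted_tree V r p \<longleftrightarrow> rooted_tree V r p \<and>
     (\<forall>v \<in> leaves V r p. \<not> (\<exists>w \<in> V - {r}. w \<noteq> v \<and> p w = p v))"

record 'a tree_family =
  ntrees :: nat
  tverts :: "nat \<Rightarrow> 'a set"
  troot  :: "nat \<Rightarrow> 'a"
  tpar   :: "nat \<Rightarrow> 'a \<Rightarrow> 'a"

definition TE :: "'a tree_family \<Rightarrow> nat \<Rightarrow> 'a set set" where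
  "TE H i = tree_edges (tverts H i) (troot H i) (tpar H i)"

definition TL :: "'a tree_family \<Rightarrow> nat \<Rightarrow> 'a set" where
  "TL H i = leaves (tverts H i) (troot H i) (tpar H i)"

(* H is the edge-disjoint union of the trees; V(H) *)
definition VH :: "'a tree_family \<Rightarrow> 'a set" where
  "VH H = (\<Union>i<ntrees H. tverts H i)"

definition binary_tree_based :: "'a tree_family \<Rightarrow> bool" where
  "binary_tree_based H \<longleftrightarrow>
     (\<forall>i<ntrees H. extended_rooted_tree (tverts H i) (troot H i) (tpar H i)) \<and>
     (\<forall>i<ntrees H. \<forall>j<ntrees H. i \<noteq> j \<longrightarrow> TE H i \<inter> TE H j = {}) \<and>
     (\<forall>i<ntrees H. \<forall>v\<in>TL H i. card {j. j < ntrees H \<and> v \<in> TL H j} = 2) \<and>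
     (\<forall>i<ntrees H. \<forall>j<ntrees H. i \<noteq> j \<longrightarrow>
         card (tverts H i \<inter> tverts H j) \<le> 1 \<and>
         tverts H i \<inter> tverts H j \<subseteq> TL H i \<inter> TL H j)"

definition adjacent :: "'a tree_family \<Rightarrow> nat \<Rightarrow> nat \<Rightarrow> bool" where
  "adjacent H i j \<longleftrightarrow> i < ntrees H \<and> j < ntrees H \<and> i \<noteq> j \<and> (\<exists>v. v \<in> TL H i \<and> v \<in> TL H j)"

definition shared_leaf :: "'a tree_family \<Rightarrow> nat \<Rightarrow> nat \<Rightarrow> 'a" where
  "shared_leaf H i j = (THE v. v \<in> TL H i \<and> v \<in> TL H j)"

definition is_path :: "'a set set \<Rightarrow> 'a \<Rightarrow> 'a \<Rightarrow> 'a list \<Rightarrow> bool" where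
  "is_path E a b xs \<longleftrightarrow> xs \<noteq> [] \<and> hd xs = a \<and> last xs = b \<and> distinct xs \<and>
     (\<forall>k. Suc k < length xs \<longrightarrow> {xs ! k, xs ! Suc k} \<in> E)"

definition clause_vars :: "'a tree_family \<Rightarrow> nat \<Rightarrow> nat \<Rightarrow> 'a set" where
  "clause_vars H i j =
     set (THE xs. is_path (TE H i \<union> TE H j) (troot H i) (troot H j) xs)"

definition nonleaf_vars :: "'a tree_family \<Rightarrow> nat \<Rightarrow> nat \<Rightarrow> 'a set" where
  "nonleaf_vars H i j = clause_vars H i j - {shared_leaf H i j}"

definition guarded_from :: "'a tree_family \<Rightarrow> 'a lit set \<Rightarrow> nat \<Rightarrow> nat \<Rightarrow> bool" where
  "guarded_from H S i j \<longleftrightarrow>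
     \<not> occurs (shared_leaf H i j) S \<or>
     (\<exists>x\<in>nonleaf_vars H i j. (x, True) \<in> S) \<or>
     ((shared_leaf H i j, True) \<in> S \<and> (\<forall>x\<in>nonleaf_vars H i j. (x, False) \<in> S))"

definition guarded :: "'a tree_family \<Rightarrow> 'a lit set \<Rightarrow> bool" where
  "guarded H S \<longleftrightarrow> (\<forall>i j. adjacent H i j \<longrightarrow> guarded_from H S i j)"

definition Fix :: "'a tree_family \<Rightarrow> 'a lit set \<Rightarrow> 'a lit set" where
  "Fix H S = {(shared_leaf H i j, True) | i j. adjacent H i j \<and>
      (shared_leaf H i j, True) \<in> S \<and> (\<forall>x\<in>nonleaf_vars H i j. (x, False) \<in> S)}"

(* satisfying assignments of phi_H, as total consistent sets of literals on V(H) *)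
definition SAT :: "'a tree_family \<Rightarrow> 'a lit set set" where
  "SAT H = {S'. consistent S' \<and> lit_vars S' = VH H \<and>
     (\<forall>i j. adjacent H i j \<longrightarrow> (\<exists>x\<in>clause_vars H i j. (x, True) \<in> S'))}"

definition weight :: "'a tree_family \<Rightarrow> 'a lit set \<Rightarrow> real" where
  "weight H S' = (1/2) ^ card (VH H - lit_vars (Fix H S'))"

definition Pr :: "'a tree_family \<Rightarrow> 'a lit set set \<Rightarrow> real" where
  "Pr H A = (\<Sum>S'\<in>A \<inter> SAT H. weight H S')"

definition EC :: "'a tree_family \<Rightarrow> 'a lit set \<Rightarrow> 'a lit set set" where
  "EC H S = {S' \<in> SAT H. S \<subseteq> S'}"

end

theory Submission
  imports Defs
begin

text \<open>Flip a fair coin for every variable, giving a uniformly random \<open>B \<subseteq> V(H)\<close>, and make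
  exactly the variables of \<open>B\<close> true, except that a shared leaf \<open>\<ell>\<^sub>i\<^sub>,\<^sub>j\<close> is also made
  true when all non-leaf variables of \<open>C\<^sub>i\<^sub>,\<^sub>j\<close> are false in \<open>B\<close>.
  No shared leaf is a non-leaf variable of any clause, so this gives a satisfying assignment,
  and every \<open>S'\<close> arises from exactly \<open>2 ^ |Fix S'|\<close> sets \<open>B\<close>: \<open>Pr\<close> is the law of this
  random assignment. For guarded \<open>S\<close>, whether the assignment extends \<open>S\<close> depends only
  on the coins of the variables of \<open>S\<close>, so the events for disjoint \<open>V\<^sub>i\<close> are independent.\<close>

section \<open>Paths to the root of a rooted tree\<close>

definition depth :: "'a \<Rightarrow> ('a \<Rightarrow> 'a) \<Rightarrow> 'a \<Rightarrow> nat" where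
  "depth r p v = (LEAST n. (p ^^ n) v = r)"

definition root_path :: "'a \<Rightarrow> ('a \<Rightarrow> 'a) \<Rightarrow> 'a \<Rightarrow> 'a list" where
  "root_path r p v = map (\<lambda>k. (p ^^ k) v) [0..<Suc (depth r p v)]"

lemma funpow_depth:
  "rooted_tree V r p \<Longrightarrow> v \<in> V \<Longrightarrow> (p ^^ depth r p v) v = r"
  unfolding depth_def rooted_tree_def by (meson LeastI_ex)

lemma funpow_neq_root_below_depth: "k < depth r p v \<Longrightarrow> (p ^^ k) v \<noteq> r"
  unfolding depth_def using not_less_Least by blast

lemma funpow_in_tree:
  assumes "rooted_tree V r p" "v \<in> V" "k \<le> depth r p v"
  shows "(p ^^ k) v \<in> V"
  using assms(3)
proof (induction k)
  case (Suc k)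
  then have "(p ^^ k) v \<in> V - {r}" using funpow_neq_root_below_depth[of k r p v] by simp
  then show ?case using assms(1) unfolding rooted_tree_def by simp
qed (use assms(2) in simp)

lemma inj_on_funpow_depth:
  assumes "rooted_tree V r p" "v \<in> V"
  shows "inj_on (\<lambda>k. (p ^^ k) v) {..depth r p v}"
proof (rule linorder_inj_onI')
  fix i j assume "i \<in> {..depth r p v}" "j \<in> {..depth r p v}" "i < j"
  then have ij: "i < j" "j \<le> depth r p v" by auto
  let ?d = "depth r p v"
  show "(p ^^ i) v \<noteq> (p ^^ j) v"
  proof
    assume eq: "(p ^^ i) v = (p ^^ j) v"
    \<comment> \<open>climbing from both vertices for \<open>d - j\<close> more steps, the root is reached early\<close>
    have "(p ^^ (?d - j + i)) v = (p ^^ (?d - j)) ((p ^^ j) v)"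
      using eq by (simp add: funpow_add)
    also have "\<dots> = r" using ij funpow_depth[OF assms]
      by (metis funpow_add le_add_diff_inverse2 o_apply)
    finally show False
      using funpow_neq_root_below_depth[of "?d - j + i" r p v] ij by linarith
  qed
qed

lemma length_root_path [simp]: "length (root_path r p v) = Suc (depth r p v)"
  unfolding root_path_def by simp

lemma nth_root_path [simp]: "k \<le> depth r p v \<Longrightarrow> root_path r p v ! k = (p ^^ k) v"
  unfolding root_path_def by (simp del: upt_Suc add: less_Suc_eq_le)

lemma root_path_Cons: "root_path r p v = v # tl (root_path r p v)"
  unfolding root_path_def by (simp add: upt_conv_Cons del: upt_Suc)

lemma set_root_path: "set (root_path r p v) = insert v (set (tl (root_path r p v)))"
  by (subst root_path_Cons) simp

lemma set_root_path_subset: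
  "rooted_tree V r p \<Longrightarrow> v \<in> V \<Longrightarrow> set (root_path r p v) \<subseteq> V"
  unfolding root_path_def using funpow_in_tree[of V r p v]
  by (auto simp del: upt_Suc simp: less_Suc_eq_le)

lemma tree_edge_cases:
  assumes "{a, b} \<in> tree_edges V r p"
  shows "(a \<in> V - {r} \<and> b = p a) \<or> (b \<in> V - {r} \<and> a = p b)"
  using assms unfolding tree_edges_def by (auto simp: doubleton_eq_iff)

lemma is_path_root_path:
  assumes "rooted_tree V r p" "v \<in> V"
  shows "is_path (tree_edges V r p) v r (root_path r p v)"
  unfolding is_path_def
proof (intro conjI allI impI)
  let ?xs = "root_path r p v"
  show "?xs \<noteq> []" "hd ?xs = v" by (subst root_path_Cons, simp)+
  show "last ?xs = r" using funpow_depth[OF assms] \<open>?xs \<noteq> []\<close> by (simp add: last_conv_nth)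
  show "distinct ?xs"
    using inj_on_funpow_depth[OF assms]
    unfolding root_path_def distinct_map
    by (simp del: upt_Suc add: atLeastLessThanSuc_atLeastAtMost atMost_atLeast0)
  fix k assume "Suc k < length ?xs"
  then have "k < depth r p v" by simp
  then show "{?xs ! k, ?xs ! Suc k} \<in> tree_edges V r p"
    using funpow_in_tree[OF assms, of k] funpow_neq_root_below_depth[of k r p v]
    unfolding tree_edges_def by auto
qed

lemma root_path_unique:
  assumes tree: "rooted_tree V r p" and "v \<in> V"
    and path: "is_path (tree_edges V r p) v r xs"
  shows "xs = root_path r p v"
proof -
  have dist: "distinct xs"
    and edge: "\<And>k. Suc k < length xs \<Longrightarrow> {xs ! k, xs ! Suc k} \<in> tree_edges V r p"
    using path unfolding is_path_def by auto
  obtain n where len: "length xs = Suc n"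
    using path unfolding is_path_def by (cases xs) auto
  have first: "xs ! 0 = v" and last: "xs ! n = r"
    using path len unfolding is_path_def by (auto simp: hd_conv_nth last_conv_nth)
  \<comment> \<open>backwards from the end: if step \<open>k+1\<close> goes to the parent, a step \<open>k\<close> to a child
     would make \<open>xs ! (k+2) = xs ! k\<close>\<close>
  have down: "xs ! Suc k = p (xs ! k)" if "k < n" for k
  proof -
    have "k \<le> n - 1" using that by simp
    then show ?thesis
    proof (induction k rule: inc_induct)
      case base
      show ?case using tree_edge_cases[OF edge[of "n - 1"]] last that len by auto
    next
      case (step k)
      then have "xs ! Suc (Suc k) \<noteq> xs ! k"
        using nth_eq_iff_index_eq[OF dist, of "Suc (Suc k)" k] len that by simp
      then show ?case using tree_edge_cases[OF edge[of k]] step len that by auto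
    qed
  qed
  have nth: "xs ! k = (p ^^ k) v" if "k \<le> n" for k
    using that by (induction k) (auto simp: first down)
  have "depth r p v \<le> n"
    unfolding depth_def using nth[of n] last by (simp add: Least_le)
  moreover have "\<not> depth r p v < n"
    using nth[of "depth r p v"] funpow_depth[OF tree \<open>v \<in> V\<close>] last
      nth_eq_iff_index_eq[OF dist, of "depth r p v" n] len by auto
  ultimately have "depth r p v = n" by simp
  then show ?thesis by (intro nth_equalityI) (auto simp: len nth)
qed

lemma root_path_ancestor_not_leaf:
  assumes "rooted_tree V r p" and "v \<in> V"
    and "w \<in> set (root_path r p v)" "w \<noteq> v"
  shows "w \<in> V - leaves V r p"
proof -
  obtain s where s: "s \<le> depth r p v" "w = (p ^^ s) v" "s \<noteq> 0"
    using assms(3,4) by (fastforce simp: in_set_conv_nth less_Suc_eq_le)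
  then obtain u where u: "s = Suc u" using not0_implies_Suc by blast
  have "(p ^^ u) v \<in> children V r p w"
    using funpow_in_tree[OF assms(1,2), of u] funpow_neq_root_below_depth[of u r p v] s u
    unfolding children_def by auto
  then show ?thesis
    using funpow_in_tree[OF assms(1,2)] s unfolding leaves_def by auto
qed

section \<open>Simple paths\<close>

lemma is_path_mono: "is_path E a b xs \<Longrightarrow> E \<subseteq> E' \<Longrightarrow> is_path E' a b xs"
  unfolding is_path_def by blast

lemma is_path_rev:
  assumes "is_path E a b xs"
  shows "is_path E b a (rev xs)"
  unfolding is_path_def
proof (intro conjI allI impI)
  show "rev xs \<noteq> []" "hd (rev xs) = b" "last (rev xs) = a" "distinct (rev xs)"
    using assms unfolding is_path_def by (auto simp: hd_rev last_rev)
  fix k assume k: "Suc k < length (rev xs)"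
  define j where "j = length xs - Suc (Suc k)"
  have "Suc j < length xs" "rev xs ! k = xs ! Suc j" "rev xs ! Suc k = xs ! j"
    using k unfolding j_def by (auto simp: rev_nth Suc_diff_Suc)
  then show "{rev xs ! k, rev xs ! Suc k} \<in> E"
    using assms unfolding is_path_def by (metis insert_commute)
qed

lemma is_path_append:
  assumes P: "is_path E a b xs" and Q: "is_path E b c ys" and disj: "set xs \<inter> set ys \<subseteq> {b}"
  shows "is_path E a c (xs @ tl ys)"
proof -
  obtain xs' where xs: "xs = xs' @ [b]"
    using P unfolding is_path_def by (metis append_butlast_last_id)
  obtain ys' where ys: "ys = b # ys'"
    using Q unfolding is_path_def by (metis list.collapse)
  have edge: "{zs ! k, zs ! Suc k} \<in> E" if "is_path E u w zs" "Suc k < length zs" for u w zs k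
    using that unfolding is_path_def by blast
  show ?thesis
    unfolding is_path_def
  proof (intro conjI allI impI)
    show "xs @ tl ys \<noteq> []" "hd (xs @ tl ys) = a" "last (xs @ tl ys) = c"
      using P Q xs ys unfolding is_path_def by (auto simp: hd_append)
    show "distinct (xs @ tl ys)"
      using P Q disj xs ys unfolding is_path_def by auto
    fix k assume k: "Suc k < length (xs @ tl ys)"
    show "{(xs @ tl ys) ! k, (xs @ tl ys) ! Suc k} \<in> E"
    proof (cases "Suc k < length xs")
      case True
      then show ?thesis using edge[OF P True] by (simp add: nth_append)
    next
      case False
      then have "(xs @ tl ys) ! k = ys ! (k - length xs')"
        "(xs @ tl ys) ! Suc k = ys ! Suc (k - length xs')"
        "Suc (k - length xs') < length ys"
        using k xs ys by (auto simp: nth_append Suc_diff_le)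
      then show ?thesis using edge[OF Q] by metis
    qed
  qed
qed

lemma is_path_Un_prefix_to_cut_vertex:
  assumes P: "is_path (E1 \<union> E2) a b xs"
    and E1: "\<forall>e\<in>E1. e \<subseteq> V1" and E2: "\<forall>e\<in>E2. e \<subseteq> V2" and cut: "V1 \<inter> V2 \<subseteq> {l}"
    and a: "a \<in> V1 - {l}" and b: "b \<notin> V1"
  shows "\<exists>k<length xs. xs ! k = l \<and> is_path E1 a l (take (Suc k) xs)"
proof -
  have ne: "xs \<noteq> []" and first: "xs ! 0 = a" and dist: "distinct xs"
    and edge: "\<And>k. Suc k < length xs \<Longrightarrow> {xs ! k, xs ! Suc k} \<in> E1 \<union> E2"
    using P unfolding is_path_def by (auto simp: hd_conv_nth)
  define exits where "exits m \<longleftrightarrow> m < length xs \<and> xs ! m \<notin> V1 - {l}" for m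
  have "exits (length xs - 1)"
    using P b ne unfolding is_path_def exits_def by (simp add: last_conv_nth)
  then obtain k where k: "exits k" and before: "\<And>m. m < k \<Longrightarrow> \<not> exits m"
    by (metis LeastI not_less_Least)
  have inside: "xs ! m \<in> V1 - {l}" if "m < k" for m
    using before[OF that] k that unfolding exits_def by simp
  have "k \<noteq> 0" using k first a unfolding exits_def by (cases k) auto
  have inE1: "{xs ! m, xs ! Suc m} \<in> E1" if "m < k" for m
    using edge[of m] inside[OF that] E2 cut k that unfolding exits_def by fastforce
  have "xs ! k \<in> V1"
    using inE1[of "k - 1"] E1 \<open>k \<noteq> 0\<close> by auto
  then have l: "xs ! k = l" using k unfolding exits_def by simp
  have "is_path E1 a l (take (Suc k) xs)"
    unfolding is_path_def
    using k l ne first dist inE1 \<open>k \<noteq> 0\<close> unfolding exits_def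
    by (auto simp: hd_conv_nth last_conv_nth)
  then show ?thesis using k l unfolding exits_def by blast
qed

lemma the_path_Un_rooted_trees:
  assumes Ti: "rooted_tree Vi ri pa" and Tj: "rooted_tree Vj rj pb"
    and cut: "Vi \<inter> Vj = {l}" and "l \<noteq> ri" "l \<noteq> rj"
  shows "(THE xs. is_path (tree_edges Vi ri pa \<union> tree_edges Vj rj pb) ri rj xs)
         = rev (root_path ri pa l) @ tl (root_path rj pb l)"
proof (rule the_equality)
  let ?Ei = "tree_edges Vi ri pa" and ?Ej = "tree_edges Vj rj pb"
  have l: "l \<in> Vi" "l \<in> Vj" using cut by auto
  have roots: "ri \<in> Vi - {l}" "rj \<in> Vj - {l}" "ri \<notin> Vj" "rj \<notin> Vi"
    using Ti Tj cut assms(4,5) unfolding rooted_tree_def by auto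
  have "is_path (?Ei \<union> ?Ej) ri l (rev (root_path ri pa l))"
    by (rule is_path_mono[OF is_path_rev[OF is_path_root_path[OF Ti l(1)]]]) simp
  moreover have "is_path (?Ei \<union> ?Ej) l rj (root_path rj pb l)"
    by (rule is_path_mono[OF is_path_root_path[OF Tj l(2)]]) simp
  ultimately show "is_path (?Ei \<union> ?Ej) ri rj (rev (root_path ri pa l) @ tl (root_path rj pb l))"
    using set_root_path_subset[OF Ti l(1)] set_root_path_subset[OF Tj l(2)] cut
    by (intro is_path_append) auto
  fix xs assume P: "is_path (?Ei \<union> ?Ej) ri rj xs"
  have Ei: "\<forall>e\<in>?Ei. e \<subseteq> Vi" and Ej: "\<forall>e\<in>?Ej. e \<subseteq> Vj"
    using Ti Tj unfolding tree_edges_def rooted_tree_def by auto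
  obtain k where k: "k < length xs" "xs ! k = l" and Pk: "is_path ?Ei ri l (take (Suc k) xs)"
    using is_path_Un_prefix_to_cut_vertex[OF P Ei Ej _ roots(1,4)] cut by auto
  have P': "is_path (?Ej \<union> ?Ei) rj ri (rev xs)"
    using is_path_rev[OF P] by (simp add: Un_commute)
  obtain k' where k': "k' < length xs" "rev xs ! k' = l"
    and Pk': "is_path ?Ej rj l (take (Suc k') (rev xs))"
    using is_path_Un_prefix_to_cut_vertex[OF P' Ej Ei _ roots(2,3)] cut by auto
  have "k = length xs - Suc k'"
    using nth_eq_iff_index_eq[of xs k "length xs - Suc k'"] P k k'
    unfolding is_path_def by (simp add: rev_nth)
  then have "take (Suc k') (rev xs) = rev (drop k xs)" by (simp add: take_rev)
  then have "drop k xs = root_path rj pb l"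
    using root_path_unique[OF Tj l(2) is_path_rev[OF Pk']] by simp
  moreover have "rev (take (Suc k) xs) = root_path ri pa l"
    using root_path_unique[OF Ti l(1) is_path_rev[OF Pk]] .
  moreover have "xs = take (Suc k) xs @ tl (drop k xs)"
    by (metis append_take_drop_id drop_Suc tl_drop)
  ultimately show "xs = rev (root_path ri pa l) @ tl (root_path rj pb l)"
    by (metis rev_rev_ident)
qed

section \<open>Clauses of a binary tree based graph\<close>

lemma rooted_tree_tverts:
  "binary_tree_based H \<Longrightarrow> i < ntrees H \<Longrightarrow> rooted_tree (tverts H i) (troot H i) (tpar H i)"
  unfolding binary_tree_based_def extended_rooted_tree_def by blast

lemma finite_VH: "binary_tree_based H \<Longrightarrow> finite (VH H)"
  unfolding VH_def using rooted_tree_tverts unfolding rooted_tree_def by auto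

lemma TL_subset: "TL H i \<subseteq> tverts H i - {troot H i}"
  unfolding TL_def leaves_def by auto

lemma leaf_in_other_tree_is_leaf:
  assumes "binary_tree_based H" "k < ntrees H" "v \<in> TL H k" "t < ntrees H" "v \<in> tverts H t"
  shows "v \<in> TL H t"
  using assms TL_subset[of H k] unfolding binary_tree_based_def by (cases "t = k") blast+

lemma adjacent_tverts_Int:
  assumes bt: "binary_tree_based H" and adj: "adjacent H i j"
  shows "tverts H i \<inter> tverts H j = {shared_leaf H i j}"
    and "shared_leaf H i j \<in> TL H i \<inter> TL H j"
proof -
  have ij: "i < ntrees H" "j < ntrees H" "i \<noteq> j" using adj unfolding adjacent_def by auto
  obtain v where v: "v \<in> TL H i" "v \<in> TL H j" using adj unfolding adjacent_def by auto
  have "finite (tverts H i \<inter> tverts H j)"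
    using rooted_tree_tverts[OF bt ij(1)] unfolding rooted_tree_def by simp
  moreover have "card (tverts H i \<inter> tverts H j) \<le> 1"
    and "tverts H i \<inter> tverts H j \<subseteq> TL H i \<inter> TL H j"
    using bt ij unfolding binary_tree_based_def by auto
  moreover have "v \<in> tverts H i \<inter> tverts H j" using v TL_subset by fast
  ultimately have common: "tverts H i \<inter> tverts H j = {v}"
    by (auto simp: card_le_Suc0_iff_eq)
  have "shared_leaf H i j = v"
    unfolding shared_leaf_def using v common TL_subset by (intro the_equality) fast+
  then show "tverts H i \<inter> tverts H j = {shared_leaf H i j}"
    and "shared_leaf H i j \<in> TL H i \<inter> TL H j" using common v by auto
qed

lemma clause_vars_eq_root_paths:
  assumes bt: "binary_tree_based H" and adj: "adjacent H i j"
  shows "clause_vars H i j = set (root_path (troot H i) (tpar H i) (shared_leaf H i j))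
                           \<union> set (root_path (troot H j) (tpar H j) (shared_leaf H i j))"
proof -
  let ?l = "shared_leaf H i j"
  have ij: "i < ntrees H" "j < ntrees H" using adj unfolding adjacent_def by auto
  have "?l \<noteq> troot H i" "?l \<noteq> troot H j"
    using adjacent_tverts_Int(2)[OF bt adj] TL_subset by fast+
  then have "(THE xs. is_path (TE H i \<union> TE H j) (troot H i) (troot H j) xs)
      = rev (root_path (troot H i) (tpar H i) ?l) @ tl (root_path (troot H j) (tpar H j) ?l)"
    unfolding TE_def
    using the_path_Un_rooted_trees[OF rooted_tree_tverts[OF bt ij(1)] rooted_tree_tverts[OF bt ij(2)]
        adjacent_tverts_Int(1)[OF bt adj]] by blast
  then show ?thesis
    unfolding clause_vars_def
    using set_root_path[of "troot H i" "tpar H i" ?l] set_root_path[of "troot H j" "tpar H j" ?l]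
    by auto
qed

lemma clause_vars_eq_insert_nonleaf_vars:
  assumes "binary_tree_based H" "adjacent H i j"
  shows "clause_vars H i j = insert (shared_leaf H i j) (nonleaf_vars H i j)"
proof -
  have "shared_leaf H i j \<in> clause_vars H i j"
    using clause_vars_eq_root_paths[OF assms] set_root_path[of "troot H i" "tpar H i" "shared_leaf H i j"]
    by simp
  then show ?thesis unfolding nonleaf_vars_def by blast
qed

lemma clause_vars_subset_VH:
  assumes bt: "binary_tree_based H" and adj: "adjacent H i j"
  shows "clause_vars H i j \<subseteq> VH H"
proof -
  have ij: "i < ntrees H" "j < ntrees H" using adj unfolding adjacent_def by auto
  have "shared_leaf H i j \<in> tverts H i" "shared_leaf H i j \<in> tverts H j"
    using adjacent_tverts_Int(1)[OF bt adj] by auto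
  then have "clause_vars H i j \<subseteq> tverts H i \<union> tverts H j"
    unfolding clause_vars_eq_root_paths[OF bt adj]
    using set_root_path_subset[OF rooted_tree_tverts[OF bt ij(1)]]
      set_root_path_subset[OF rooted_tree_tverts[OF bt ij(2)]] by blast
  moreover have "tverts H i \<union> tverts H j \<subseteq> VH H" using ij unfolding VH_def by blast
  ultimately show ?thesis by blast
qed

lemma nonleaf_var_not_leaf:
  assumes bt: "binary_tree_based H" and adj: "adjacent H i j" and x: "x \<in> nonleaf_vars H i j"
  shows "(x \<in> tverts H i \<and> x \<notin> TL H i) \<or> (x \<in> tverts H j \<and> x \<notin> TL H j)"
proof -
  have ij: "i < ntrees H" "j < ntrees H" using adj unfolding adjacent_def by auto
  have l: "shared_leaf H i j \<in> tverts H i" "shared_leaf H i j \<in> tverts H j"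
    using adjacent_tverts_Int(1)[OF bt adj] by auto
  have "x \<noteq> shared_leaf H i j"
    and "x \<in> set (root_path (troot H i) (tpar H i) (shared_leaf H i j))
       \<or> x \<in> set (root_path (troot H j) (tpar H j) (shared_leaf H i j))"
    using x clause_vars_eq_root_paths[OF bt adj] unfolding nonleaf_vars_def by auto
  then show ?thesis
    using root_path_ancestor_not_leaf[OF rooted_tree_tverts[OF bt ij(1)] l(1), of x]
      root_path_ancestor_not_leaf[OF rooted_tree_tverts[OF bt ij(2)] l(2), of x]
    unfolding TL_def by blast
qed

lemma shared_leaf_notin_nonleaf_vars:
  assumes bt: "binary_tree_based H" and "adjacent H i j" "adjacent H k m"
  shows "shared_leaf H k m \<notin> nonleaf_vars H i j"
proof
  assume "shared_leaf H k m \<in> nonleaf_vars H i j"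
  then obtain t where t: "t < ntrees H" "shared_leaf H k m \<in> tverts H t"
    and not_leaf: "shared_leaf H k m \<notin> TL H t"
    using nonleaf_var_not_leaf[OF bt assms(2)] assms(2) unfolding adjacent_def by blast
  have "k < ntrees H" "shared_leaf H k m \<in> TL H k"
    using assms(3) adjacent_tverts_Int(2)[OF bt assms(3)] unfolding adjacent_def by auto
  from leaf_in_other_tree_is_leaf[OF bt this t] not_leaf show False by contradiction
qed

section \<open>Independence of events on disjoint coordinates\<close>

definition depends_only_on :: "'a set \<Rightarrow> 'a set set \<Rightarrow> bool" where
  "depends_only_on W E \<longleftrightarrow> (\<forall>B. B \<in> E \<longleftrightarrow> B \<inter> W \<in> E)"

definition subset_density :: "'a set \<Rightarrow> 'a set set \<Rightarrow> real" where
  "subset_density V E = card (E \<inter> Pow V) / 2 ^ card V"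

lemma depends_only_on_mono:
  assumes "depends_only_on W E" "W \<subseteq> W'"
  shows "depends_only_on W' E"
  unfolding depends_only_on_def
proof
  fix B
  have "B \<inter> W' \<inter> W = B \<inter> W" using assms(2) by blast
  then show "B \<in> E \<longleftrightarrow> B \<inter> W' \<in> E"
    using assms(1) unfolding depends_only_on_def by metis
qed

lemma depends_only_on_Int:
  "depends_only_on W1 E \<Longrightarrow> depends_only_on W2 G \<Longrightarrow> depends_only_on (W1 \<union> W2) (E \<inter> G)"
  using depends_only_on_mono[of W1 E "W1 \<union> W2"] depends_only_on_mono[of W2 G "W1 \<union> W2"]
  unfolding depends_only_on_def by blast

lemma depends_only_on_INT:
  assumes "\<forall>i\<in>I. depends_only_on (W i) (E i)"
  shows "depends_only_on (\<Union>i\<in>I. W i) (\<Inter>i\<in>I. E i)"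
  unfolding depends_only_on_def
proof
  fix B
  have "B \<in> E i \<longleftrightarrow> B \<inter> (\<Union>i\<in>I. W i) \<in> E i" if "i \<in> I" for i
    using depends_only_on_mono[of "W i" "E i" "\<Union>i\<in>I. W i"] assms that
    unfolding depends_only_on_def by blast
  then show "B \<in> (\<Inter>i\<in>I. E i) \<longleftrightarrow> B \<inter> (\<Union>i\<in>I. W i) \<in> (\<Inter>i\<in>I. E i)" by blast
qed

lemma card_Int_Pow_depends_only_on:
  assumes "finite V" "W \<subseteq> V" "depends_only_on W E"
  shows "card (E \<inter> Pow V) = card (E \<inter> Pow W) * 2 ^ card (V - W)"
proof -
  have dep: "B \<in> E \<longleftrightarrow> B \<inter> W \<in> E" for B
    using assms(3) unfolding depends_only_on_def by blast
  have "bij_betw (\<lambda>B. (B \<inter> W, B - W)) (E \<inter> Pow V) ((E \<inter> Pow W) \<times> Pow (V - W))"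
  proof (rule bij_betw_byWitness[where f' = "\<lambda>(C, Y). C \<union> Y"])
    show "\<forall>B\<in>E \<inter> Pow V. (\<lambda>(C, Y). C \<union> Y) (B \<inter> W, B - W) = B" by auto
    show "\<forall>CY\<in>(E \<inter> Pow W) \<times> Pow (V - W). (\<lambda>B. (B \<inter> W, B - W)) ((\<lambda>(C, Y). C \<union> Y) CY) = CY"
      by auto
    show "(\<lambda>B. (B \<inter> W, B - W)) ` (E \<inter> Pow V) \<subseteq> (E \<inter> Pow W) \<times> Pow (V - W)"
      using dep by blast
    show "(\<lambda>(C, Y). C \<union> Y) ` ((E \<inter> Pow W) \<times> Pow (V - W)) \<subseteq> E \<inter> Pow V"
    proof clarify
      fix C Y assume CY: "C \<in> E" "C \<subseteq> W" "Y \<subseteq> V - W"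
      then have "(C \<union> Y) \<inter> W = C" by blast
      then have "C \<union> Y \<in> E" using dep[of "C \<union> Y"] CY(1) by simp
      then show "C \<union> Y \<in> E \<inter> Pow V" using CY assms(2) by blast
    qed
  qed
  then have "card (E \<inter> Pow V) = card (E \<inter> Pow W) * card (Pow (V - W))"
    by (simp add: bij_betw_same_card card_cartesian_product)
  then show ?thesis using assms(1) by (simp add: card_Pow)
qed

lemma subset_density_depends_only_on:
  assumes "finite V" "W \<subseteq> V" "depends_only_on W E"
  shows "subset_density V E = subset_density W E"
proof -
  have "card V = card W + card (V - W)"
    using assms(1,2) by (metis card_Diff_subset card_mono finite_subset le_add_diff_inverse)
  then show ?thesis
    unfolding subset_density_def card_Int_Pow_depends_only_on[OF assms] by (simp add: power_add)
qed

lemma card_Int_Pow_Un_disjoint: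
  assumes "W1 \<inter> W2 = {}" "depends_only_on W1 E" "depends_only_on W2 G"
  shows "card (E \<inter> G \<inter> Pow (W1 \<union> W2)) = card (E \<inter> Pow W1) * card (G \<inter> Pow W2)"
proof -
  have dep: "B \<in> E \<longleftrightarrow> B \<inter> W1 \<in> E" "B \<in> G \<longleftrightarrow> B \<inter> W2 \<in> G" for B
    using assms(2,3) unfolding depends_only_on_def by blast+
  have "bij_betw (\<lambda>B. (B \<inter> W1, B \<inter> W2)) (E \<inter> G \<inter> Pow (W1 \<union> W2)) ((E \<inter> Pow W1) \<times> (G \<inter> Pow W2))"
  proof (rule bij_betw_byWitness[where f' = "\<lambda>(C1, C2). C1 \<union> C2"])
    show "\<forall>B\<in>E \<inter> G \<inter> Pow (W1 \<union> W2). (\<lambda>(C1, C2). C1 \<union> C2) (B \<inter> W1, B \<inter> W2) = B"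
      by auto
    show "\<forall>CC\<in>(E \<inter> Pow W1) \<times> (G \<inter> Pow W2).
        (\<lambda>B. (B \<inter> W1, B \<inter> W2)) ((\<lambda>(C1, C2). C1 \<union> C2) CC) = CC"
      using assms(1) by auto
    show "(\<lambda>B. (B \<inter> W1, B \<inter> W2)) ` (E \<inter> G \<inter> Pow (W1 \<union> W2)) \<subseteq> (E \<inter> Pow W1) \<times> (G \<inter> Pow W2)"
      using dep by blast
    show "(\<lambda>(C1, C2). C1 \<union> C2) ` ((E \<inter> Pow W1) \<times> (G \<inter> Pow W2)) \<subseteq> E \<inter> G \<inter> Pow (W1 \<union> W2)"
    proof clarify
      fix C1 C2 assume C: "C1 \<in> E" "C1 \<subseteq> W1" "C2 \<in> G" "C2 \<subseteq> W2"
      then have "(C1 \<union> C2) \<inter> W1 = C1" "(C1 \<union> C2) \<inter> W2 = C2" using assms(1) by blast+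
      then have "C1 \<union> C2 \<in> E" "C1 \<union> C2 \<in> G" using dep[of "C1 \<union> C2"] C by simp_all
      then show "C1 \<union> C2 \<in> E \<inter> G \<inter> Pow (W1 \<union> W2)" using C by blast
    qed
  qed
  then show ?thesis by (simp add: bij_betw_same_card card_cartesian_product)
qed

lemma subset_density_Int:
  assumes "finite V" "W1 \<subseteq> V" "W2 \<subseteq> V" "W1 \<inter> W2 = {}"
    and "depends_only_on W1 E" "depends_only_on W2 G"
  shows "subset_density V (E \<inter> G) = subset_density V E * subset_density V G"
proof -
  have fin: "finite W1" "finite W2" using assms(1-3) finite_subset by auto
  have "subset_density V (E \<inter> G) = subset_density (W1 \<union> W2) (E \<inter> G)"
    using assms(1-3) depends_only_on_Int[OF assms(5,6)] by (simp add: subset_density_depends_only_on)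
  also have "\<dots> = subset_density W1 E * subset_density W2 G"
    using card_Int_Pow_Un_disjoint[OF assms(4-6)] fin assms(4)
    unfolding subset_density_def by (simp add: card_Un_disjoint power_add)
  also have "\<dots> = subset_density V E * subset_density V G"
    using assms by (simp add: subset_density_depends_only_on)
  finally show ?thesis .
qed

lemma subset_density_INT:
  fixes q :: nat
  assumes "finite V" "\<forall>i<q. W i \<subseteq> V" "\<forall>i<q. \<forall>j<q. i \<noteq> j \<longrightarrow> W i \<inter> W j = {}"
    and "\<forall>i<q. depends_only_on (W i) (E i)"
  shows "subset_density V (\<Inter>i<q. E i) = (\<Prod>i<q. subset_density V (E i))"
  using assms(2-4)
proof (induction q)
  case 0
  show ?case using assms(1) by (simp add: subset_density_def card_Pow)
next
  case (Suc q)
  have "depends_only_on (\<Union>i<q. W i) (\<Inter>i<q. E i)"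
    using Suc.prems(3) by (intro depends_only_on_INT) simp
  moreover have "(\<Union>i<q. W i) \<inter> W q = {}"
  proof -
    have "W i \<inter> W q = {}" if "i < q" for i using Suc.prems(2) that by simp
    then show ?thesis by blast
  qed
  moreover have "(\<Union>i<q. W i) \<subseteq> V" "W q \<subseteq> V" "depends_only_on (W q) (E q)"
    using Suc.prems(1,3) by (auto simp: less_Suc_eq)
  ultimately have "subset_density V ((\<Inter>i<q. E i) \<inter> E q)
      = subset_density V (\<Inter>i<q. E i) * subset_density V (E q)"
    by (intro subset_density_Int[OF assms(1)])
  then show ?case using Suc by (simp add: lessThan_Suc Int_commute)
qed

section \<open>The random assignment\<close>

definition forced :: "'a tree_family \<Rightarrow> 'a set \<Rightarrow> 'a \<Rightarrow> bool" where
  "forced H B v \<longleftrightarrow> (\<exists>i j. adjacent H i j \<and> v = shared_leaf H i j \<and> nonleaf_vars H i j \<inter> B = {})"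

definition assignment :: "'a tree_family \<Rightarrow> 'a set \<Rightarrow> 'a lit set" where
  "assignment H B = (\<lambda>v. (v, v \<in> B \<or> forced H B v)) ` VH H"

lemma mem_assignment_iff:
  "(v, c) \<in> assignment H B \<longleftrightarrow> v \<in> VH H \<and> c = (v \<in> B \<or> forced H B v)"
  unfolding assignment_def by auto

lemma nonleaf_var_not_forced:
  "binary_tree_based H \<Longrightarrow> adjacent H i j \<Longrightarrow> x \<in> nonleaf_vars H i j \<Longrightarrow> \<not> forced H B x"
  using shared_leaf_notin_nonleaf_vars unfolding forced_def by blast

lemma assignment_in_SAT:
  assumes bt: "binary_tree_based H"
  shows "assignment H B \<in> SAT H"
  unfolding SAT_def
proof (intro CollectI conjI allI impI)
  show "consistent (assignment H B)"
    unfolding consistent_def mem_assignment_iff by auto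
  show "lit_vars (assignment H B) = VH H"
    unfolding lit_vars_def assignment_def image_image by simp
  fix i j assume adj: "adjacent H i j"
  have vars: "clause_vars H i j = insert (shared_leaf H i j) (nonleaf_vars H i j)"
    "clause_vars H i j \<subseteq> VH H"
    using clause_vars_eq_insert_nonleaf_vars[OF bt adj] clause_vars_subset_VH[OF bt adj] by auto
  show "\<exists>x\<in>clause_vars H i j. (x, True) \<in> assignment H B"
  proof (cases "nonleaf_vars H i j \<inter> B = {}")
    case True
    then have "forced H B (shared_leaf H i j)" using adj unfolding forced_def by blast
    then show ?thesis using vars by (auto simp: mem_assignment_iff)
  next
    case False
    then show ?thesis using vars by (auto simp: mem_assignment_iff)
  qed
qed

lemma mem_SAT_iff:
  assumes "S' \<in> SAT H"
  shows "(v, c) \<in> S' \<longleftrightarrow> v \<in> VH H \<and> c = ((v, True) \<in> S')"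
proof -
  have "consistent S'" and vars: "fst ` S' = VH H"
    using assms unfolding SAT_def lit_vars_def by auto
  moreover have "v \<in> VH H \<longleftrightarrow> (v, True) \<in> S' \<or> (v, False) \<in> S'"
    unfolding vars[symmetric] by (auto simp: image_iff) (metis (full_types) prod.collapse, force+)
  ultimately show ?thesis unfolding consistent_def by (cases c) auto
qed

lemma lit_vars_Fix:
  "v \<in> lit_vars (Fix H S') \<longleftrightarrow> (\<exists>i j. adjacent H i j \<and> v = shared_leaf H i j \<and>
      (v, True) \<in> S' \<and> (\<forall>x\<in>nonleaf_vars H i j. (x, False) \<in> S'))"
  unfolding lit_vars_def Fix_def by (auto simp: image_iff)

lemma shared_leaf_in_lit_vars_Fix:
  assumes bt: "binary_tree_based H" and S': "S' \<in> SAT H" and adj: "adjacent H i j"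
    and false: "\<forall>x\<in>nonleaf_vars H i j. (x, True) \<notin> S'"
  shows "shared_leaf H i j \<in> lit_vars (Fix H S')"
proof -
  have vars: "clause_vars H i j = insert (shared_leaf H i j) (nonleaf_vars H i j)"
    "clause_vars H i j \<subseteq> VH H"
    using clause_vars_eq_insert_nonleaf_vars[OF bt adj] clause_vars_subset_VH[OF bt adj] by auto
  \<comment> \<open>the clause \<open>C\<^sub>i\<^sub>,\<^sub>j\<close> is satisfied, and only its leaf is left to satisfy it\<close>
  obtain y where "y \<in> clause_vars H i j" "(y, True) \<in> S'"
    using S' adj unfolding SAT_def by blast
  then have "(shared_leaf H i j, True) \<in> S'" using vars(1) false by auto
  moreover have "(x, False) \<in> S'" if "x \<in> nonleaf_vars H i j" for x
    using that false vars mem_SAT_iff[OF S', of x False] by auto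
  ultimately show ?thesis unfolding lit_vars_Fix using adj by blast
qed

lemma assignment_eq_iff_values:
  assumes "S' \<in> SAT H"
  shows "assignment H B = S' \<longleftrightarrow> (\<forall>v\<in>VH H. (v \<in> B \<or> forced H B v) = ((v, True) \<in> S'))"
proof
  assume "assignment H B = S'"
  then show "\<forall>v\<in>VH H. (v \<in> B \<or> forced H B v) = ((v, True) \<in> S')"
    using mem_assignment_iff[of _ True H B] by blast
next
  assume "\<forall>v\<in>VH H. (v \<in> B \<or> forced H B v) = ((v, True) \<in> S')"
  then have "(v, c) \<in> assignment H B \<longleftrightarrow> (v, c) \<in> S'" for v c
    using mem_SAT_iff[OF assms, of v c] by (cases c) (auto simp: mem_assignment_iff)
  then show "assignment H B = S'" by (intro set_eqI) (metis prod.collapse)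
qed

text \<open>The values of \<open>B\<close> on the fixed leaves of \<open>S'\<close> are irrelevant: those leaves are forced.\<close>

lemma coins_eq_if_assignment_eq:
  assumes bt: "binary_tree_based H" and S': "S' \<in> SAT H" and eq: "assignment H B = S'"
    and v: "v \<in> VH H - lit_vars (Fix H S')"
  shows "v \<in> B \<longleftrightarrow> (v, True) \<in> S'"
proof -
  have vals: "\<forall>v\<in>VH H. (v \<in> B \<or> forced H B v) = ((v, True) \<in> S')"
    using eq assignment_eq_iff_values[OF S'] by blast
  have "\<not> forced H B v" if "v \<notin> B"
  proof
    assume "forced H B v"
    then obtain i j where ij: "adjacent H i j" "v = shared_leaf H i j" "nonleaf_vars H i j \<inter> B = {}"
      unfolding forced_def by blast
    have "(x, True) \<notin> S'" if "x \<in> nonleaf_vars H i j" for x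
      using vals nonleaf_var_not_forced[OF bt ij(1) that] that ij(3)
        clause_vars_subset_VH[OF bt ij(1)] unfolding nonleaf_vars_def by blast
    then show False using shared_leaf_in_lit_vars_Fix[OF bt S' ij(1)] ij(2) v by blast
  qed
  then show ?thesis using vals v by blast
qed

lemma assignment_eq_if_coins_eq:
  assumes bt: "binary_tree_based H" and S': "S' \<in> SAT H"
    and coins: "\<forall>v\<in>VH H - lit_vars (Fix H S'). v \<in> B \<longleftrightarrow> (v, True) \<in> S'"
  shows "assignment H B = S'"
  unfolding assignment_eq_iff_values[OF S']
proof
  let ?X = "lit_vars (Fix H S')"
  fix v assume v: "v \<in> VH H"
  have nonleaf: "x \<in> B \<longleftrightarrow> (x, True) \<in> S'" if "adjacent H i j" "x \<in> nonleaf_vars H i j" for i j x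
  proof -
    have "x \<notin> ?X"
      using shared_leaf_notin_nonleaf_vars[OF bt that(1)] that(2) unfolding lit_vars_Fix by blast
    moreover have "x \<in> VH H"
      using clause_vars_subset_VH[OF bt that(1)] that(2) unfolding nonleaf_vars_def by blast
    ultimately show ?thesis using coins by blast
  qed
  show "(v \<in> B \<or> forced H B v) = ((v, True) \<in> S')"
  proof (cases "v \<in> ?X")
    case True
    then obtain i j where ij: "adjacent H i j" "v = shared_leaf H i j" "(v, True) \<in> S'"
      "\<forall>x\<in>nonleaf_vars H i j. (x, False) \<in> S'"
      unfolding lit_vars_Fix by blast
    have "(x, True) \<notin> S'" if "x \<in> nonleaf_vars H i j" for x
      using ij(4) that S' unfolding SAT_def consistent_def by blast
    then have "forced H B v" using nonleaf[OF ij(1)] ij(1,2) unfolding forced_def by blast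
    then show ?thesis using ij(3) by blast
  next
    case False
    have "\<not> forced H B v"
    proof
      assume "forced H B v"
      then obtain i j where ij: "adjacent H i j" "v = shared_leaf H i j" "nonleaf_vars H i j \<inter> B = {}"
        unfolding forced_def by blast
      then have "\<forall>x\<in>nonleaf_vars H i j. (x, True) \<notin> S'" using nonleaf[OF ij(1)] by blast
      then show False using shared_leaf_in_lit_vars_Fix[OF bt S' ij(1)] ij(2) False by blast
    qed
    then show ?thesis using coins v False by blast
  qed
qed

lemma assignment_eq_iff:
  assumes "binary_tree_based H" "S' \<in> SAT H"
  shows "assignment H B = S' \<longleftrightarrow> (\<forall>v\<in>VH H - lit_vars (Fix H S'). v \<in> B \<longleftrightarrow> (v, True) \<in> S')"
  using coins_eq_if_assignment_eq[OF assms] assignment_eq_if_coins_eq[OF assms] by blast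

lemma lit_vars_Fix_subset_VH:
  assumes "binary_tree_based H"
  shows "lit_vars (Fix H S') \<subseteq> VH H"
proof
  fix v assume "v \<in> lit_vars (Fix H S')"
  then obtain i j where "adjacent H i j" "v = shared_leaf H i j" unfolding lit_vars_Fix by blast
  then show "v \<in> VH H"
    using clause_vars_eq_insert_nonleaf_vars[OF assms] clause_vars_subset_VH[OF assms] by blast
qed

lemma card_assignment_fiber:
  assumes bt: "binary_tree_based H" and S': "S' \<in> SAT H"
  shows "card ({B. assignment H B = S'} \<inter> Pow (VH H)) = 2 ^ card (lit_vars (Fix H S'))"
proof -
  let ?V = "VH H" and ?X = "lit_vars (Fix H S')"
  define T where "T = {v \<in> ?V - ?X. (v, True) \<in> S'}"
  have fiber: "{B. assignment H B = S'} = {B. B \<inter> (?V - ?X) = T}"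
    unfolding assignment_eq_iff[OF bt S'] T_def by blast
  have "depends_only_on (?V - ?X) {B. B \<inter> (?V - ?X) = T}"
    unfolding depends_only_on_def by (simp add: Int_assoc)
  moreover have "{B. B \<inter> (?V - ?X) = T} \<inter> Pow (?V - ?X) = {T}"
    unfolding T_def by blast
  moreover have "?V - (?V - ?X) = ?X" using lit_vars_Fix_subset_VH[OF bt] by blast
  ultimately show ?thesis
    unfolding fiber using card_Int_Pow_depends_only_on[OF finite_VH[OF bt], of "?V - ?X"] by simp
qed

lemma finite_SAT: "binary_tree_based H \<Longrightarrow> finite (SAT H)"
  by (rule finite_subset[of _ "Pow (VH H \<times> UNIV)"])
    (force simp: SAT_def lit_vars_def finite_VH)+

lemma Pr_eq_subset_density:
  assumes bt: "binary_tree_based H"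
  shows "Pr H A = subset_density (VH H) {B. assignment H B \<in> A}"
proof -
  let ?V = "VH H" and ?fix = "\<lambda>S'. card (lit_vars (Fix H S'))"
  have "{B. assignment H B \<in> A} \<inter> Pow ?V = (\<Union>S'\<in>A \<inter> SAT H. {B. assignment H B = S'} \<inter> Pow ?V)"
    using assignment_in_SAT[OF bt] by blast
  then have "card ({B. assignment H B \<in> A} \<inter> Pow ?V)
      = (\<Sum>S'\<in>A \<inter> SAT H. card ({B. assignment H B = S'} \<inter> Pow ?V))"
    by (simp only:) (rule card_UN_disjoint, use finite_SAT[OF bt] finite_VH[OF bt] in auto)
  also have "\<dots> = (\<Sum>S'\<in>A \<inter> SAT H. 2 ^ ?fix S')"
    using card_assignment_fiber[OF bt] by simp
  finally have card: "real (card ({B. assignment H B \<in> A} \<inter> Pow ?V)) = (\<Sum>S'\<in>A \<inter> SAT H. 2 ^ ?fix S')"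
    by simp
  have "weight H S' = 2 ^ ?fix S' / 2 ^ card ?V" for S'
  proof -
    have "card ?V = card (?V - lit_vars (Fix H S')) + ?fix S'"
      using lit_vars_Fix_subset_VH[OF bt] finite_VH[OF bt]
      by (metis card_Diff_subset card_mono finite_subset le_add_diff_inverse2)
    then show ?thesis unfolding weight_def by (simp add: power_add power_one_over)
  qed
  then show ?thesis
    unfolding Pr_def subset_density_def card by (simp add: sum_divide_distrib)
qed

text \<open>If \<open>S\<close> fixes a leaf, the leaf is forced under both \<open>B\<close> and \<open>B'\<close>; otherwise guardedness
  gives a non-leaf variable of its clause that is true in \<open>S\<close>, and the leaf is forced under
  neither.\<close>

lemma guarded_subset_assignment:
  assumes bt: "binary_tree_based H" and cons: "consistent S" and guard: "guarded H S"
    and sub: "S \<subseteq> assignment H B" and agree: "B \<inter> lit_vars S = B' \<inter> lit_vars S"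
  shows "S \<subseteq> assignment H B'"
proof
  fix z assume "z \<in> S"
  then obtain v c where z: "z = (v, c)" and vc: "(v, c) \<in> S" by (cases z) blast
  have in_vars: "x \<in> lit_vars S" if "(x, b) \<in> S" for x b
    using that unfolding lit_vars_def by force
  have coin: "x \<in> B \<longleftrightarrow> x \<in> B'" if "(x, b) \<in> S" for x b
    using agree in_vars[OF that] by blast
  have "(v, c) \<in> assignment H B" using sub vc by blast
  then have v: "v \<in> VH H" and c: "c = (v \<in> B \<or> forced H B v)"
    by (simp_all add: mem_assignment_iff)
  have coin_nonleaf: "(x, b) \<in> S \<Longrightarrow> x \<in> B \<longleftrightarrow> b"
    if "adjacent H i j" "x \<in> nonleaf_vars H i j" for i j x b
    using sub nonleaf_var_not_forced[OF bt that] by (auto simp: mem_assignment_iff)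
  show "z \<in> assignment H B'"
  proof (cases "\<exists>i j. adjacent H i j \<and> v = shared_leaf H i j \<and> (v, True) \<in> S
      \<and> (\<forall>x\<in>nonleaf_vars H i j. (x, False) \<in> S)")
    case True
    then obtain i j where ij: "adjacent H i j" "v = shared_leaf H i j" "(v, True) \<in> S"
      "\<forall>x\<in>nonleaf_vars H i j. (x, False) \<in> S" by blast
    have "c" using ij(3) vc cons unfolding consistent_def by (cases c) auto
    moreover have "nonleaf_vars H i j \<inter> B' = {}"
      using ij(4) coin_nonleaf[OF ij(1)] coin by blast
    then have "forced H B' v" using ij(1,2) unfolding forced_def by blast
    ultimately show ?thesis using z v by (simp add: mem_assignment_iff)
  next
    case False
    have "\<not> forced H B0 v" if "B0 \<in> {B, B'}" for B0
    proof
      assume "forced H B0 v"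
      then obtain i j where ij: "adjacent H i j" "v = shared_leaf H i j" "nonleaf_vars H i j \<inter> B0 = {}"
        unfolding forced_def by blast
      have "occurs v S" using vc unfolding occurs_def by (cases c) auto
      then obtain x where x: "x \<in> nonleaf_vars H i j" "(x, True) \<in> S"
        using guard ij(1,2) False unfolding guarded_def guarded_from_def by blast
      then have "x \<in> B" "x \<in> B'" using coin_nonleaf[OF ij(1)] coin by blast+
      then show False using x(1) ij(3) that by blast
    qed
    then show ?thesis using z v c coin[OF vc] by (simp add: mem_assignment_iff)
  qed
qed

lemma depends_only_on_assignment_EC:
  assumes bt: "binary_tree_based H"
    and SS: "\<forall>S\<in>SS. consistent S \<and> guarded H S \<and> lit_vars S = W"
  shows "depends_only_on W {B. assignment H B \<in> (\<Union>S\<in>SS. EC H S)}"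
  unfolding depends_only_on_def
proof
  fix B
  have "S \<subseteq> assignment H B \<longleftrightarrow> S \<subseteq> assignment H (B \<inter> W)" if "S \<in> SS" for S
  proof -
    have S: "consistent S" "guarded H S" "lit_vars S = W" using SS that by blast+
    then have "B \<inter> lit_vars S = (B \<inter> W) \<inter> lit_vars S" by blast
    then show ?thesis using guarded_subset_assignment[OF bt S(1,2)] by metis
  qed
  moreover have "assignment H B \<in> SAT H" "assignment H (B \<inter> W) \<in> SAT H"
    using assignment_in_SAT[OF bt] by blast+
  ultimately show "B \<in> {B. assignment H B \<in> (\<Union>S\<in>SS. EC H S)}
      \<longleftrightarrow> B \<inter> W \<in> {B. assignment H B \<in> (\<Union>S\<in>SS. EC H S)}"
    unfolding EC_def by blast
qed

theorem lemma18:
  fixes H :: "'a tree_family"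
    and q :: nat
    and Vs :: "nat \<Rightarrow> 'a set"
    and SS :: "nat \<Rightarrow> 'a lit set set"
  assumes "binary_tree_based H"
    and "\<forall>i<q. Vs i \<subseteq> VH H"
    and "\<forall>i<q. \<forall>j<q. i \<noteq> j \<longrightarrow> Vs i \<inter> Vs j = {}"
    and "\<forall>i<q. \<forall>S\<in>SS i. consistent S \<and> guarded H S \<and> lit_vars S = Vs i"
  shows "Pr H (SAT H \<inter> (\<Inter>i<q. \<Union>S\<in>SS i. EC H S))
         = (\<Prod>i<q. Pr H (\<Union>S\<in>SS i. EC H S))"
proof -
  note bt = assms(1)
  define E where "E i = {B. assignment H B \<in> (\<Union>S\<in>SS i. EC H S)}" for i
  have events: "{B. assignment H B \<in> SAT H \<inter> (\<Inter>i<q. \<Union>S\<in>SS i. EC H S)} = (\<Inter>i<q. E i)"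
    unfolding E_def using assignment_in_SAT[OF bt] by auto
  have "\<forall>i<q. depends_only_on (Vs i) (E i)"
    unfolding E_def using depends_only_on_assignment_EC[OF bt] assms(4) by simp
  then have "subset_density (VH H) (\<Inter>i<q. E i) = (\<Prod>i<q. subset_density (VH H) (E i))"
    using subset_density_INT[OF finite_VH[OF bt] assms(2,3)] by blast
  then show ?thesis
    unfolding Pr_eq_subset_density[OF bt] events E_def .
qed

end
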